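(* Let $\gamma,\beta,\mu>0$ and, for $t\ge0$, $k\in\mathbb{R}^3$ with $\lambda_+(k)\neq\lambda_-(k)$, let $\mathcal N(t,k)$ be the $7\times7$ matrix \begin{equation*} \mathcal{N}=\begin{pmatrix} \frac{\lambda_+e^{\lambda_- t}-\lambda_-e^{\lambda_+ t}}{\lambda_+-\lambda_-} & -i\gamma{k}^T \frac{e^{\lambda_+ t}-e^{\lambda_- t}}{\lambda_+-\lambda_-} & 0 \\[2mm] -i\gamma k\frac{e^{\lambda_+ t}-e^{\lambda_- t}}{\lambda_+-\lambda_-} & \frac{\lambda_+e^{\lambda_+ t}-\lambda_-e^{\lambda_- t}}{\lambda_+-\lambda_-}\mathbf{I}_3 & -\beta\frac{e^{\lambda_+ t}-e^{\lambda_- t}}{\lambda_+-\lambda_-}\mathbf{I}_3\\[2mm] 0 & \beta\frac{e^{\lambda_+ t}-e^{\lambda_- t}}{\lambda_+-\lambda_-}\mathbf{I}_3 & \frac{\lambda_+e^{\lambda_- t}-\lambda_-e^{\lambda_+ t}}{\lambda_+-\lambda_-}\mathbf{I}_3 \end{pmatrix},\quad \lambda_\pm=-\tfrac{1}{2}\mu |k|^2\pm \tfrac{1}{2} \sqrt{\mu^2 |k|^4-4(\gamma^2|k|^2+\beta^2)}. \end{equation*} Then there exist constants $0<\epsilon<L$ such that, with $\mathbb{D}_0=\{|k|\le\epsilon\}$, $\mathbb{D}_1=\{\epsilon\le|k|\le L\}$, $\mathbb{D}_\infty=\{|k|\ge L\}$, the following entrywise bounds hold for $t\ge0$ and $k$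 (where $\mathcal N$ is defined). Over $\mathbb{D}_0$, \begin{equation*} |\mathcal{N}| \lesssim \begin{pmatrix} 1 & |k|d_3^T & 0 \\ |k|d_3 & \mathbf{I}_3 &\mathbf{I}_3 \\ 0 & \mathbf{I}_3 & \mathbf{I}_3 \end{pmatrix} e^{-\frac{1}{2}\mu |k|^2 t}. \end{equation*} Over $\mathbb{D}_\infty$, \begin{equation*} |\mathcal{N}| \lesssim \begin{pmatrix} 1 & |k|^{-1}d_3^T & 0 \\ |k|^{-1}d_3 & |k|^{-2}\mathbf{I}_3 & |k|^{-2}\mathbf{I}_3 \\ 0 & |k|^{-2}\mathbf{I}_3 & \mathbf{I}_3 \end{pmatrix} e^{-O(1) t} + \begin{pmatrix} |k|^{-2} & |k|^{-1}d_3^T & 0 \\ |k|^{-1}d_3 & \mathbf{I}_3 & |k|^{-2}\mathbf{I}_3 \\ 0 & |k|^{-2}\mathbf{I}_3 & |k|^{-2}\mathbf{I}_3 \end{pmatrix} e^{-O(1) |k|^2 t}. \end{equation*} Over $\mathbb{D}_1$, \begin{equation*} |\mathcal{N}| \lesssim \begin{pmatrix} 1 & d_3^T & 0 \\ d_3 & \mathbf{I}_3 & \mathbf{I}_3 \\ 0 & \mathbf{I}_3 & \mathbf{I}_3 \end{pmatrix} e^{-O(1) t}. \end{equation*}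
   Context: $|\mathcal N|$ denotes the matrix whose entries are the absolute values of those of $\mathcal N$; the inequalities are entrywise up to a constant. $d_3=(1,1,1)^T$; $\mathbf I_3$ is the $3\times3$ identity. $O(1)$ denotes a generic strictly positive constant independent of $t,k$; $A\lesssim B$ means $A\le CB$ for a constant $C$ independent of $t,k$. *)

theory Defs
  imports "HOL-Analysis.Analysis"
begin

text \<open>Eigenvalues lambda_plus / lambda_minus (complex; csqrt is the principal square root).
  All entries of N are symmetric under swapping the two, so the branch choice is irrelevant.\<close>

definition lam_p :: "real \<Rightarrow> real \<Rightarrow> real \<Rightarrow> real^3 \<Rightarrow> complex" where
  "lam_p \<gamma> \<beta> \<mu> k = complex_of_real (- \<mu> * norm k ^ 2 / 2)
     + csqrt (complex_of_real (\<mu>^2 * norm k ^ 4 - 4 * (\<gamma>^2 * norm k ^ 2 + \<beta>^2))) / 2"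

definition lam_m :: "real \<Rightarrow> real \<Rightarrow> real \<Rightarrow> real^3 \<Rightarrow> complex" where
  "lam_m \<gamma> \<beta> \<mu> k = complex_of_real (- \<mu> * norm k ^ 2 / 2)
     - csqrt (complex_of_real (\<mu>^2 * norm k ^ 4 - 4 * (\<gamma>^2 * norm k ^ 2 + \<beta>^2))) / 2"

definition kc :: "real^3 \<Rightarrow> nat \<Rightarrow> real" where
  "kc k i = k $ (if i = 1 then 1 else if i = 2 then 2 else 3)"

text \<open>The 7x7 matrix N(t,k), indices 0..6: index 0 is the scalar block,
  1..3 the middle block, 4..6 the last block.\<close>
definition Nmat :: "real \<Rightarrow> real \<Rightarrow> real \<Rightarrow> real \<Rightarrow> real^3 \<Rightarrow> nat \<Rightarrow> nat \<Rightarrow> complex" where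
  "Nmat \<gamma> \<beta> \<mu> t k i j =
    (let lp = lam_p \<gamma> \<beta> \<mu> k; lm = lam_m \<gamma> \<beta> \<mu> k; tc = complex_of_real t;
         A = (lp * exp (lm * tc) - lm * exp (lp * tc)) / (lp - lm);
         B = (exp (lp * tc) - exp (lm * tc)) / (lp - lm);
         D = (lp * exp (lp * tc) - lm * exp (lm * tc)) / (lp - lm)
     in if i = 0 \<and> j = 0 then A
        else if i = 0 \<and> 1 \<le> j \<and> j \<le> 3 then - \<i> * complex_of_real (\<gamma> * kc k j) * B
        else if j = 0 \<and> 1 \<le> i \<and> i \<le> 3 then - \<i> * complex_of_real (\<gamma> * kc k i) * B
        else if 1 \<le> i \<and> i \<le> 3 \<and> 1 \<le> j \<and> j \<le> 3 then (if i = j then D else 0)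
        else if 1 \<le> i \<and> i \<le> 3 \<and> 4 \<le> j \<and> j \<le> 6 then
               (if j = i + 3 then - complex_of_real \<beta> * B else 0)
        else if 4 \<le> i \<and> i \<le> 6 \<and> 1 \<le> j \<and> j \<le> 3 then
               (if i = j + 3 then complex_of_real \<beta> * B else 0)
        else if 4 \<le> i \<and> i \<le> 6 \<and> 4 \<le> j \<and> j \<le> 6 then (if i = j then A else 0)
        else 0)"

text \<open>Block bound pattern
  [[x00, x01 d3^T, 0], [x01 d3, x11 I3, x12 I3], [0, x12 I3, x22 I3]] with indices 0..6.\<close>
definition bpat :: "real \<Rightarrow> real \<Rightarrow> real \<Rightarrow> real \<Rightarrow> real \<Rightarrow> nat \<Rightarrow> nat \<Rightarrow> real" where
  "bpat x00 x01 x11 x12 x22 i j =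
     (if i = 0 \<and> j = 0 then x00
      else if i = 0 \<and> 1 \<le> j \<and> j \<le> 3 then x01
      else if j = 0 \<and> 1 \<le> i \<and> i \<le> 3 then x01
      else if 1 \<le> i \<and> i \<le> 3 \<and> 1 \<le> j \<and> j \<le> 3 then (if i = j then x11 else 0)
      else if 1 \<le> i \<and> i \<le> 3 \<and> 4 \<le> j \<and> j \<le> 6 then (if j = i + 3 then x12 else 0)
      else if 4 \<le> i \<and> i \<le> 6 \<and> 1 \<le> j \<and> j \<le> 3 then (if i = j + 3 then x12 else 0)
      else if 4 \<le> i \<and> i \<le> 6 \<and> 4 \<le> j \<and> j \<le> 6 then (if i = j then x22 else 0)
      else 0)"

end

theory Submission
  imports Defs
begin

text \<open>The eigenvalues \<open>\<lambda>\<^sub>\<plusminus>\<close> are the roots of \<open>z\<^sup>2 + \<mu>|k|\<^sup>2 z + (\<gamma>\<^sup>2|k|\<^sup>2 + \<beta>\<^sup>2)\<close>, and every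
  entry of N is a bounded multiple of one of the three quotients \<open>A, B, D\<close> with denominator
  \<open>\<lambda>\<^sub>+ - \<lambda>\<^sub>-\<close> from its definition. For small \<open>|k|\<close> the roots are complex conjugate with
  real part \<open>-\<mu>|k|\<^sup>2/2\<close> and \<open>|\<lambda>\<^sub>+ - \<lambda>\<^sub>-| \<ge> \<beta>\<close>, so the denominator is harmless. For large
  \<open>|k|\<close> the roots are real, \<open>\<lambda>\<^sub>+ \<le> -\<gamma>\<^sup>2/\<mu>\<close>, \<open>\<lambda>\<^sub>- \<le> -\<mu>|k|\<^sup>2/2\<close> and
  \<open>\<lambda>\<^sub>+ - \<lambda>\<^sub>- \<ge> \<mu>|k|\<^sup>2/2\<close>, which produces the two time scales. On the compact middle range
  both real parts stay below some \<open>-m < 0\<close> but the roots may coalesce; there the mean value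
  theorem bounds \<open>|B|\<close> by \<open>t e\<^sup>-\<^sup>m\<^sup>t\<close>, and \<open>A = e\<^sup>\<lambda>\<^sup>-\<^sup>t - \<lambda>\<^sub>- B\<close>,
  \<open>D = e\<^sup>\<lambda>\<^sup>+\<^sup>t + \<lambda>\<^sub>- B\<close>.\<close>

definition coef_A :: "complex \<Rightarrow> complex \<Rightarrow> real \<Rightarrow> complex" where
  "coef_A lp lm t = (lp * exp (lm * of_real t) - lm * exp (lp * of_real t)) / (lp - lm)"

definition coef_B :: "complex \<Rightarrow> complex \<Rightarrow> real \<Rightarrow> complex" where
  "coef_B lp lm t = (exp (lp * of_real t) - exp (lm * of_real t)) / (lp - lm)"

definition coef_D :: "complex \<Rightarrow> complex \<Rightarrow> real \<Rightarrow> complex" where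
  "coef_D lp lm t = (lp * exp (lp * of_real t) - lm * exp (lm * of_real t)) / (lp - lm)"

lemma coef_A_eq_coef_B: "lp \<noteq> lm \<Longrightarrow> coef_A lp lm t = exp (lm * of_real t) - lm * coef_B lp lm t"
  unfolding coef_A_def coef_B_def by (simp add: field_simps)

lemma coef_D_eq_coef_B: "lp \<noteq> lm \<Longrightarrow> coef_D lp lm t = exp (lp * of_real t) + lm * coef_B lp lm t"
  unfolding coef_D_def coef_B_def by (simp add: field_simps)

lemma Nmat_eq_coefs: "Nmat \<gamma> \<beta> \<mu> t k i j =
    (let A = coef_A (lam_p \<gamma> \<beta> \<mu> k) (lam_m \<gamma> \<beta> \<mu> k) t;
         B = coef_B (lam_p \<gamma> \<beta> \<mu> k) (lam_m \<gamma> \<beta> \<mu> k) t;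
         D = coef_D (lam_p \<gamma> \<beta> \<mu> k) (lam_m \<gamma> \<beta> \<mu> k) t
     in if i = 0 \<and> j = 0 then A
        else if i = 0 \<and> 1 \<le> j \<and> j \<le> 3 then - \<i> * complex_of_real (\<gamma> * kc k j) * B
        else if j = 0 \<and> 1 \<le> i \<and> i \<le> 3 then - \<i> * complex_of_real (\<gamma> * kc k i) * B
        else if 1 \<le> i \<and> i \<le> 3 \<and> 1 \<le> j \<and> j \<le> 3 then (if i = j then D else 0)
        else if 1 \<le> i \<and> i \<le> 3 \<and> 4 \<le> j \<and> j \<le> 6 then
               (if j = i + 3 then - complex_of_real \<beta> * B else 0)
        else if 4 \<le> i \<and> i \<le> 6 \<and> 1 \<le> j \<and> j \<le> 3 then
               (if i = j + 3 then complex_of_real \<beta> * B else 0)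
        else if 4 \<le> i \<and> i \<le> 6 \<and> 4 \<le> j \<and> j \<le> 6 then (if i = j then A else 0)
        else 0)"
  by (simp only: Nmat_def Let_def coef_A_def coef_B_def coef_D_def)

lemma abs_kc_le_norm: "\<bar>kc k i\<bar> \<le> norm k"
  unfolding kc_def by (rule component_le_norm_cart)

lemma norm_Nmat_le_bpat:
  assumes "\<gamma> \<ge> 0" and "\<beta> \<ge> 0" and "i < 7" and "j < 7"
    and "cmod (coef_A (lam_p \<gamma> \<beta> \<mu> k) (lam_m \<gamma> \<beta> \<mu> k) t) \<le> X00"
    and "\<gamma> * norm k * cmod (coef_B (lam_p \<gamma> \<beta> \<mu> k) (lam_m \<gamma> \<beta> \<mu> k) t) \<le> X01"
    and "cmod (coef_D (lam_p \<gamma> \<beta> \<mu> k) (lam_m \<gamma> \<beta> \<mu> k) t) \<le> X11"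
    and "\<beta> * cmod (coef_B (lam_p \<gamma> \<beta> \<mu> k) (lam_m \<gamma> \<beta> \<mu> k) t) \<le> X12"
    and "cmod (coef_A (lam_p \<gamma> \<beta> \<mu> k) (lam_m \<gamma> \<beta> \<mu> k) t) \<le> X22"
  shows "cmod (Nmat \<gamma> \<beta> \<mu> t k i j) \<le> bpat X00 X01 X11 X12 X22 i j"
proof -
  let ?B = "coef_B (lam_p \<gamma> \<beta> \<mu> k) (lam_m \<gamma> \<beta> \<mu> k) t"
  have k_entry: "cmod (- \<i> * complex_of_real (\<gamma> * kc k l) * ?B) \<le> X01" for l
  proof -
    have "cmod (- \<i> * complex_of_real (\<gamma> * kc k l) * ?B) = \<gamma> * \<bar>kc k l\<bar> * cmod ?B"
      using assms(1) by (simp add: norm_mult abs_mult)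
    also have "\<dots> \<le> \<gamma> * norm k * cmod ?B"
      using assms(1) abs_kc_le_norm by (intro mult_right_mono mult_left_mono) auto
    finally show ?thesis using assms(6) by linarith
  qed
  have \<beta>_entry: "cmod (- complex_of_real \<beta> * ?B) \<le> X12" "cmod (complex_of_real \<beta> * ?B) \<le> X12"
    using assms(2,8) by (simp_all add: norm_mult)
  have "i = 0 \<or> i = 1 \<or> i = 2 \<or> i = 3 \<or> i = 4 \<or> i = 5 \<or> i = 6"
    and "j = 0 \<or> j = 1 \<or> j = 2 \<or> j = 3 \<or> j = 4 \<or> j = 5 \<or> j = 6"
    using assms(3,4) by linarith+
  then show ?thesis
    by (elim disjE; simp only: Nmat_eq_coefs bpat_def Let_def;
        simp add: assms(5,7,9) k_entry[simplified] \<beta>_entry[simplified])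
qed

lemma mult_bpat:
  "C * bpat x00 x01 x11 x12 x22 i j * E
    = bpat (C*x00*E) (C*x01*E) (C*x11*E) (C*x12*E) (C*x22*E) i j"
  unfolding bpat_def by auto

lemma mult_bpat_add:
  "C * (bpat x00 x01 x11 x12 x22 i j * E + bpat y00 y01 y11 y12 y22 i j * F) =
   bpat (C*(x00*E+y00*F)) (C*(x01*E+y01*F)) (C*(x11*E+y11*F)) (C*(x12*E+y12*F)) (C*(x22*E+y22*F)) i j"
  unfolding bpat_def by auto

lemma norm_diff_quotient_le:
  fixes x y e1 e2 w :: complex
  assumes "0 < w0" "w0 \<le> cmod w" "cmod x \<le> X" "cmod y \<le> Y" "cmod e1 \<le> E1" "cmod e2 \<le> E2"
  shows "cmod ((x*e1 - y*e2)/w) \<le> (X*E1 + Y*E2)/w0"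
proof -
  have X: "0 \<le> X" and Y: "0 \<le> Y" and E: "0 \<le> E1" "0 \<le> E2"
    using assms(3-6) norm_ge_zero order_trans by blast+
  have "cmod ((x*e1 - y*e2)/w) = cmod (x*e1 - y*e2) / cmod w" by (simp add: norm_divide)
  also have "\<dots> \<le> (cmod x * cmod e1 + cmod y * cmod e2) / cmod w"
    by (intro divide_right_mono) (auto intro: order_trans[OF norm_triangle_ineq4] simp: norm_mult)
  also have "\<dots> \<le> (X*E1 + Y*E2) / cmod w"
    using assms X Y by (intro divide_right_mono add_mono mult_mono) auto
  also have "\<dots> \<le> (X*E1 + Y*E2) / w0"
    using assms X Y E by (intro divide_left_mono add_nonneg_nonneg mult_nonneg_nonneg mult_pos_pos) auto
  finally show ?thesis .
qed

lemma norm_exp_mult_le: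
  assumes "Re z \<le> -m" and "t \<ge> 0"
  shows "cmod (exp (z * of_real t)) \<le> exp (-m * t)"
  using mult_right_mono[OF assms] by simp

lemma norm_exp_mult_diff_le:
  assumes "Re x \<le> -m" and "Re y \<le> -m" and t: "t \<ge> 0"
  shows "cmod (exp (x * of_real t) - exp (y * of_real t)) \<le> t * exp (-m*t) * cmod (x - y)"
proof -
  let ?S = "{z. Re z \<le> -m}"
  have "norm ((\<lambda>z. exp (z * of_real t)) x - (\<lambda>z. exp (z * of_real t)) y)
        \<le> (t * exp (-m*t)) * norm (x - y)"
  proof (rule field_differentiable_bound[where f' = "\<lambda>z. exp (z * of_real t) * of_real t"])
    show "convex ?S" by (rule convex_halfspace_Re_le)
    show "((\<lambda>z. exp (z * of_real t)) has_field_derivative exp (z * of_real t) * of_real t)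
            (at z within ?S)" for z
      by (auto intro!: derivative_eq_intros)
    show "norm (exp (z * of_real t) * of_real t) \<le> t * exp (-m*t)" if "z \<in> ?S" for z
      using norm_exp_mult_le[of z m t] that t by (simp add: norm_mult mult.commute mult_left_mono)
  qed (use assms in auto)
  then show ?thesis by simp
qed

lemma mult_exp_le_exp_half:
  fixes m t :: real
  assumes m: "m > 0" and t: "t \<ge> 0"
  shows "t * exp (-m*t) \<le> 2/m * exp (-(m/2)*t)"
proof -
  have "m*t/2 \<le> exp (m*t/2)" using exp_ge_add_one_self[of "m*t/2"] by linarith
  then have "t \<le> 2/m * exp (m*t/2)" using m by (simp add: field_simps)
  then have "t * exp (-m*t) \<le> 2/m * exp (m*t/2) * exp (-m*t)" by (rule mult_right_mono) simp
  also have "\<dots> = 2/m * exp (-(m/2)*t)" by (simp add: mult.assoc flip: exp_add)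
  finally show ?thesis .
qed

lemma norm_quadratic_root_le:
  fixes z b c :: complex
  assumes "z^2 + b*z + c = 0"
  shows "cmod z \<le> 1 + cmod b + cmod c"
proof (cases "cmod z \<le> 1")
  case True then show ?thesis by (smt (verit) norm_ge_zero)
next
  case False
  have "z*z = - (b*z + c)" using assms by (simp add: power2_eq_square algebra_simps add_eq_0_iff)
  then have "cmod z * cmod z = cmod (b*z + c)" by (metis norm_minus_cancel norm_mult)
  also have "\<dots> \<le> cmod b * cmod z + cmod c"
    by (metis norm_mult norm_triangle_ineq add_mono order_refl order_trans)
  also have "\<dots> \<le> (cmod b + cmod c) * cmod z"
    using False mult_left_mono[of 1 "cmod z" "cmod c"] by (simp add: algebra_simps)
  finally have "cmod z \<le> cmod b + cmod c"
    using False by (simp add: mult_le_cancel_right) (metis norm_zero zero_le_one)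
  then show ?thesis by simp
qed

text \<open>With \<open>r = \<surd>(4a\<^sup>2 - 4q)\<close>, \<open>a - r/2\<close> is the smaller root of \<open>z\<^sup>2 - 2az + q\<close>.\<close>

lemma smaller_root_bounds:
  fixes a q r :: real
  assumes a: "a > 0" and q: "q \<ge> 0" and r: "r \<ge> 0" and rr: "r^2 = 4*a^2 - 4*q"
  shows "r \<le> 2*a" "q \<le> (a - r/2) * (2*a)" "a - r/2 \<le> q/a" "0 \<le> a - r/2"
proof -
  have prod: "(a - r/2)*(a + r/2) = q" using rr by (simp add: algebra_simps power2_eq_square)
  have "r^2 \<le> (2*a)^2" using rr q by (simp add: power_mult_distrib)
  from power2_le_imp_le[OF this] a show r2: "r \<le> 2*a" by linarith
  then show nn: "0 \<le> a - r/2" by linarith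
  have "(a - r/2) * (a + r/2) \<le> (a - r/2) * (2*a)"
    by (rule mult_left_mono) (use r2 nn in linarith)+
  then show "q \<le> (a - r/2) * (2*a)" using prod by linarith
  have "(a - r/2) * a \<le> (a - r/2) * (a + r/2)" by (rule mult_left_mono) (use r nn in linarith)+
  then have "(a - r/2) * a \<le> q" using prod by linarith
  then show "a - r/2 \<le> q/a" using a by (simp add: field_simps)
qed

subsection \<open>The eigenvalues\<close>

lemma lam_quadratic:
  "(lam_p g b u k)^2 + of_real (u*norm k^2) * lam_p g b u k + of_real (g^2*norm k^2+b^2) = 0"
  "(lam_m g b u k)^2 + of_real (u*norm k^2) * lam_m g b u k + of_real (g^2*norm k^2+b^2) = 0"
proof -
  define w where "w = csqrt (of_real (u^2 * norm k^4 - 4*(g^2*norm k^2 + b^2)))"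
  have w2: "w*w = of_real (u^2 * norm k^4 - 4*(g^2*norm k^2 + b^2))"
    unfolding w_def by (metis power2_csqrt power2_eq_square)
  have p: "lam_p g b u k = of_real (- u * norm k ^ 2 / 2) + w/2" by (simp add: lam_p_def w_def)
  have m: "lam_m g b u k = of_real (- u * norm k ^ 2 / 2) - w/2" by (simp add: lam_m_def w_def)
  show "(lam_p g b u k)^2 + of_real (u*norm k^2) * lam_p g b u k + of_real (g^2*norm k^2+b^2) = 0"
    unfolding p by (simp add: power2_eq_square algebra_simps w2 field_simps eval_nat_numeral)
  show "(lam_m g b u k)^2 + of_real (u*norm k^2) * lam_m g b u k + of_real (g^2*norm k^2+b^2) = 0"
    unfolding m by (simp add: power2_eq_square algebra_simps w2 field_simps eval_nat_numeral)
qed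

lemma norm_lam_le:
  assumes "u \<ge> 0" and "norm k \<le> R"
  shows "cmod (lam_p g b u k) \<le> 1 + u*R^2 + g^2*R^2 + b^2"
    and "cmod (lam_m g b u k) \<le> 1 + u*R^2 + g^2*R^2 + b^2"
proof -
  have kR: "norm k^2 \<le> R^2" using assms(2) by (intro power_mono) auto
  have "cmod (complex_of_real (u*norm k^2)) \<le> u*R^2"
    unfolding norm_of_real using assms(1) kR by (simp add: mult_left_mono)
  moreover have "cmod (complex_of_real (g^2*norm k^2 + b^2)) \<le> g^2*R^2 + b^2"
    unfolding norm_of_real using kR by (simp add: mult_left_mono)
  ultimately show "cmod (lam_p g b u k) \<le> 1 + u*R^2 + g^2*R^2 + b^2"
    and "cmod (lam_m g b u k) \<le> 1 + u*R^2 + g^2*R^2 + b^2"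
    using norm_quadratic_root_le[OF lam_quadratic(1)] norm_quadratic_root_le[OF lam_quadratic(2)]
    by (smt (verit))+
qed

lemma lam_discr_neg:
  assumes "u^2 * norm k^4 - 4*(g^2*norm k^2 + b^2) < 0"
  shows "Re (lam_p g b u k) = - u*norm k^2/2" "Re (lam_m g b u k) = - u*norm k^2/2"
    "cmod (lam_p g b u k - lam_m g b u k) = sqrt (- (u^2 * norm k^4 - 4*(g^2*norm k^2 + b^2)))"
  using assms by (simp_all add: lam_p_def lam_m_def norm_mult)

lemma lam_discr_nonneg:
  assumes "0 \<le> u^2 * norm k^4 - 4*(g^2*norm k^2 + b^2)"
  shows "lam_p g b u k = of_real (- u*norm k^2/2 + sqrt (u^2 * norm k^4 - 4*(g^2*norm k^2 + b^2))/2)"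
    "lam_m g b u k = of_real (- u*norm k^2/2 - sqrt (u^2 * norm k^4 - 4*(g^2*norm k^2 + b^2))/2)"
  using assms by (simp_all add: lam_p_def lam_m_def csqrt_of_real)

lemma lam_real_roots:
  assumes u: "u > 0" and s: "norm k > 0" and discr: "0 \<le> u^2*norm k^4 - 4*(g^2*norm k^2+b^2)"
  defines "a \<equiv> u*norm k^2/2" and "q \<equiv> g^2*norm k^2+b^2"
    and "r \<equiv> sqrt (u^2*norm k^4 - 4*(g^2*norm k^2+b^2))"
  shows "lam_p g b u k = of_real (-a + r/2)" and "lam_m g b u k = of_real (-a - r/2)"
    and "r \<ge> 0" and "r^2 = 4*a^2 - 4*q" and "g^2/u \<le> a - r/2"
proof -
  have a0: "a > 0" using u s by (simp add: a_def)
  show r0: "r \<ge> 0" using discr by (simp add: r_def)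
  have "u^2*norm k^4 - 4*(g^2*norm k^2+b^2) = 4*a^2 - 4*q"
    by (simp add: a_def q_def power_mult_distrib field_simps eval_nat_numeral)
  then show rr: "r^2 = 4*a^2 - 4*q" using discr by (simp add: r_def)
  have "(g^2/u) * (2*a) = g^2 * norm k^2" using u by (simp add: a_def field_simps)
  also have "\<dots> \<le> q" by (simp add: q_def)
  also have "\<dots> \<le> (a - r/2) * (2*a)" using smaller_root_bounds(2)[OF a0 _ r0 rr] by (simp add: q_def)
  finally show "g^2/u \<le> a - r/2" by (rule mult_right_le_imp_le) (use a0 in simp)
  show "lam_p g b u k = of_real (-a + r/2)" and "lam_m g b u k = of_real (-a - r/2)"
    using lam_discr_nonneg[OF discr] by (simp_all add: a_def r_def)
qed

lemma Re_lam_le: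
  assumes u: "u > 0" and s: "norm k > 0"
  shows "Re (lam_p g b u k) \<le> - min (u*norm k^2/2) (g^2/u)"
    and "Re (lam_m g b u k) \<le> - min (u*norm k^2/2) (g^2/u)"
proof -
  have mn: "min (u*norm k^2/2) (g^2/u) \<le> u*norm k^2/2" "min (u*norm k^2/2) (g^2/u) \<le> g^2/u"
    by (rule min.cobounded1, rule min.cobounded2)
  have "Re (lam_p g b u k) \<le> - min (u*norm k^2/2) (g^2/u)
        \<and> Re (lam_m g b u k) \<le> - min (u*norm k^2/2) (g^2/u)"
  proof (cases "u^2*norm k^4 - 4*(g^2*norm k^2+b^2) < 0")
    case True
    then show ?thesis using lam_discr_neg(1,2)[OF True] mn by (intro conjI) linarith+
  next
    case False
    then have "0 \<le> u^2*norm k^4 - 4*(g^2*norm k^2+b^2)" by linarith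
    note roots = lam_real_roots[OF u s this]
    have "Re (lam_p g b u k) \<le> -(g^2/u)" and "Re (lam_m g b u k) \<le> -(g^2/u)"
      unfolding roots(1,2) Re_complex_of_real using roots(3,5) by linarith+
    then show ?thesis using mn by (intro conjI) linarith+
  qed
  then show "Re (lam_p g b u k) \<le> - min (u*norm k^2/2) (g^2/u)"
    and "Re (lam_m g b u k) \<le> - min (u*norm k^2/2) (g^2/u)" by simp_all
qed

subsection \<open>Bounds on the coefficients\<close>

lemma coefs_bound_small_k:
  fixes g :: real
  assumes b: "b > 0" and u: "u > 0" and t: "t \<ge> 0"
    and s1: "norm k \<le> 1" and sb: "u * norm k \<le> b"
  defines "E \<equiv> exp (- (1/2) * u * norm k ^ 2 * t)" and "M \<equiv> 1 + u + g^2 + b^2"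
  shows "cmod (coef_B (lam_p g b u k) (lam_m g b u k) t) \<le> 2/b * E"
    and "cmod (coef_A (lam_p g b u k) (lam_m g b u k) t) \<le> 2*M/b * E"
    and "cmod (coef_D (lam_p g b u k) (lam_m g b u k) t) \<le> 2*M/b * E"
proof -
  define s where "s = norm k"
  define d where "d = u^2 * norm k^4 - 4*(g^2*norm k^2 + b^2)"
  have s0: "0 \<le> s" by (simp add: s_def)
  have "s^4 \<le> s^2" using s1 s0 unfolding s_def by (intro power_decreasing) auto
  then have "u^2 * s^4 \<le> (u * s)^2" by (simp add: power_mult_distrib mult_left_mono)
  also have "\<dots> \<le> b^2" using sb s0 u unfolding s_def by (intro power_mono) auto
  finally have us: "u^2 * s^4 \<le> b^2" .
  have d_eq: "d = u^2 * s^4 - 4 * (g^2 * s^2) - 4 * b^2" by (simp add: d_def s_def algebra_simps)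
  have "0 \<le> g^2 * s^2" "0 < b^2" using b by simp_all
  then have dneg: "d < 0" and discr: "b^2 \<le> - d" using d_eq us by linarith+
  have w: "b \<le> cmod (lam_p g b u k - lam_m g b u k)"
    using lam_discr_neg(3)[OF dneg[unfolded d_def]] real_le_rsqrt[OF discr] by (simp add: d_def)
  have ep: "cmod (exp (lam_p g b u k * of_real t)) \<le> E"
    using lam_discr_neg(1)[OF dneg[unfolded d_def]] by (simp add: E_def algebra_simps)
  have em: "cmod (exp (lam_m g b u k * of_real t)) \<le> E"
    using lam_discr_neg(2)[OF dneg[unfolded d_def]] by (simp add: E_def algebra_simps)
  have lp: "cmod (lam_p g b u k) \<le> M" and lm: "cmod (lam_m g b u k) \<le> M"
    using norm_lam_le[of u k 1 g b] u s1 by (simp_all add: M_def)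
  have e1: "(E + E)/b = 2/b * E" "(M*E + M*E)/b = 2*M/b*E" by (simp_all add: field_simps)
  show "cmod (coef_B (lam_p g b u k) (lam_m g b u k) t) \<le> 2/b * E"
    using norm_diff_quotient_le[OF b w _ _ ep em, of 1 1 1 1] unfolding coef_B_def e1 by simp
  show "cmod (coef_A (lam_p g b u k) (lam_m g b u k) t) \<le> 2*M/b * E"
    using norm_diff_quotient_le[OF b w lp lm em ep] unfolding coef_A_def e1 .
  show "cmod (coef_D (lam_p g b u k) (lam_m g b u k) t) \<le> 2*M/b * E"
    using norm_diff_quotient_le[OF b w lp lm ep em] unfolding coef_D_def e1 .
qed

lemma coefs_bound_middle_k:
  assumes g: "g > 0" and u: "u > 0" and t: "t \<ge> 0"
    and ne: "lam_p g b u k \<noteq> lam_m g b u k" and e0: "0 < \<epsilon>" and e1: "\<epsilon> \<le> norm k"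
    and L: "norm k \<le> L"
  defines "m \<equiv> min (u*\<epsilon>^2/2) (g^2/u)"
  defines "E \<equiv> exp (-(m/2)*t)" and "M \<equiv> 1 + u*L^2 + g^2*L^2 + b^2"
  shows "cmod (coef_B (lam_p g b u k) (lam_m g b u k) t) \<le> 2/m * E"
    and "cmod (coef_A (lam_p g b u k) (lam_m g b u k) t) \<le> (1 + M*(2/m)) * E"
    and "cmod (coef_D (lam_p g b u k) (lam_m g b u k) t) \<le> (1 + M*(2/m)) * E"
proof -
  let ?lp = "lam_p g b u k" and ?lm = "lam_m g b u k"
  have m0: "m > 0" using u g e0 by (simp add: m_def)
  have "\<epsilon>^2 \<le> norm k^2" using e0 e1 by (intro power_mono) auto
  have "m \<le> min (u*norm k^2/2) (g^2/u)" unfolding m_def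
    by (rule min.mono) (use \<open>\<epsilon>^2 \<le> norm k^2\<close> u in auto)
  moreover have s0: "norm k > 0" using e0 e1 by linarith
  ultimately have rp: "Re ?lp \<le> -m" and rm: "Re ?lm \<le> -m"
    using Re_lam_le[OF u s0, where b = b and g = g] by linarith+
  have "exp (-m*t) \<le> E" unfolding E_def using m0 t by (simp add: mult_right_mono)
  then have xp: "cmod (exp (?lp * of_real t)) \<le> E" and xm: "cmod (exp (?lm * of_real t)) \<le> E"
    using norm_exp_mult_le[OF rp t] norm_exp_mult_le[OF rm t] by linarith+
  have "cmod (coef_B ?lp ?lm t)
        = cmod (exp (?lp * of_real t) - exp (?lm * of_real t)) / cmod (?lp - ?lm)"
    unfolding coef_B_def by (simp add: norm_divide)
  also have "\<dots> \<le> t * exp (-m*t)"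
    using norm_exp_mult_diff_le[OF rp rm t] ne by (simp add: pos_divide_le_eq)
  also have "\<dots> \<le> 2/m * E" unfolding E_def by (rule mult_exp_le_exp_half[OF m0 t])
  finally show hB: "cmod (coef_B ?lp ?lm t) \<le> 2/m * E" .
  have lm: "cmod ?lm \<le> M" using norm_lam_le(2)[OF _ L] u by (simp add: M_def)
  have lmB: "cmod (?lm * coef_B ?lp ?lm t) \<le> M * (2/m * E)"
    unfolding norm_mult using lm hB by (intro mult_mono) (auto intro: order_trans[OF norm_ge_zero])
  have "cmod (coef_A ?lp ?lm t) \<le> cmod (exp (?lm * of_real t)) + cmod (?lm * coef_B ?lp ?lm t)"
    unfolding coef_A_eq_coef_B[OF ne] by (rule norm_triangle_ineq4)
  then show "cmod (coef_A ?lp ?lm t) \<le> (1 + M*(2/m)) * E" using xm lmB by (simp add: algebra_simps)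
  have "cmod (coef_D ?lp ?lm t) \<le> cmod (exp (?lp * of_real t)) + cmod (?lm * coef_B ?lp ?lm t)"
    unfolding coef_D_eq_coef_B[OF ne] by (rule norm_triangle_ineq)
  then show "cmod (coef_D ?lp ?lm t) \<le> (1 + M*(2/m)) * E" using xp lmB by (simp add: algebra_simps)
qed

lemma coefs_bound_large_k:
  fixes g :: real
  assumes u: "u > 0" and t: "t \<ge> 0"
    and s1: "1 \<le> norm k" and big: "4*(g^2*norm k^2 + b^2) \<le> 3/4 * u^2 * norm k^4"
  defines "Ec \<equiv> exp (-(g^2/u)*t)" and "Es \<equiv> exp (-(u*norm k^2/2)*t)"
    and "K \<equiv> 4*(g^2+b^2)/u^2"
  shows "cmod (coef_A (lam_p g b u k) (lam_m g b u k) t) \<le> 2*Ec + K/norm k^2 * Es"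
    and "cmod (coef_D (lam_p g b u k) (lam_m g b u k) t) \<le> K/norm k^2 * Ec + 2*Es"
    and "cmod (coef_B (lam_p g b u k) (lam_m g b u k) t) \<le> 2/(u*norm k^2) * (Ec + Es)"
proof -
  define a where "a = u*norm k^2/2"
  define q where "q = g^2*norm k^2+b^2"
  define r where "r = sqrt (u^2*norm k^4 - 4*(g^2*norm k^2+b^2))"
  have s0: "norm k > 0" using s1 by linarith
  have a0: "a > 0" using u s0 by (simp add: a_def)
  have q0: "q \<ge> 0" by (simp add: q_def)
  have a2: "a^2 = u^2 * norm k^4 / 4"
    by (simp add: a_def power_mult_distrib power_divide eval_nat_numeral)
  have ad: "a^2 \<le> u^2*norm k^4 - 4*(g^2*norm k^2+b^2)" using big unfolding a2 by linarith
  note real_roots = lam_real_roots[OF u s0 order_trans[OF zero_le_power2 ad],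
      folded a_def q_def r_def]
  note P = real_roots(1,2) and r0 = real_roots(3) and G = real_roots(5)
  note roots = smaller_root_bounds[OF a0 q0 r0 real_roots(4)]
  have ar: "a \<le> r" unfolding r_def using ad by (rule real_le_rsqrt)
  have w: "a \<le> cmod (lam_p g b u k - lam_m g b u k)"
    unfolding P using ar r0 by (simp flip: of_real_diff)
  have lp: "cmod (lam_p g b u k) \<le> q/a" using roots(3,4) unfolding P norm_of_real by linarith
  have lm: "cmod (lam_m g b u k) \<le> 2*a" using roots(1) r0 a0 unfolding P norm_of_real by linarith
  have ep: "cmod (exp (lam_p g b u k * of_real t)) \<le> Ec"
    unfolding Ec_def by (rule norm_exp_mult_le[OF _ t]) (use G P in simp)
  have em: "cmod (exp (lam_m g b u k * of_real t)) \<le> Es"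
    unfolding Es_def by (rule norm_exp_mult_le[OF _ t]) (use r0 P in \<open>simp add: a_def\<close>)
  have Ec0: "0 \<le> Ec" "0 \<le> Es" by (simp_all add: Ec_def Es_def)
  have qa: "q/a^2 \<le> K/norm k^2"
  proof -
    have "b^2 * 1 \<le> b^2 * norm k^2" using s1 by (intro mult_left_mono) (auto simp: one_le_power)
    then have "q \<le> (g^2+b^2) * norm k^2" by (simp add: q_def algebra_simps)
    then have "q/a^2 \<le> ((g^2+b^2) * norm k^2)/a^2" using a0 by (intro divide_right_mono) auto
    also have "\<dots> = K/norm k^2" using s0 u unfolding a2 K_def by (simp add: field_simps)
    finally show ?thesis .
  qed
  have "cmod (coef_A (lam_p g b u k) (lam_m g b u k) t) \<le> (q/a*Es + 2*a*Ec)/a"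
    using norm_diff_quotient_le[OF a0 w lp lm em ep] unfolding coef_A_def .
  also have "\<dots> = q/a^2 * Es + 2*Ec" using a0 by (simp add: field_simps power2_eq_square)
  also have "\<dots> \<le> K/norm k^2 * Es + 2*Ec" using qa Ec0 by (intro add_mono mult_right_mono) auto
  finally show "cmod (coef_A (lam_p g b u k) (lam_m g b u k) t) \<le> 2*Ec + K/norm k^2 * Es" by simp
  have "cmod (coef_D (lam_p g b u k) (lam_m g b u k) t) \<le> (q/a*Ec + 2*a*Es)/a"
    using norm_diff_quotient_le[OF a0 w lp lm ep em] unfolding coef_D_def .
  also have "\<dots> = q/a^2 * Ec + 2*Es" using a0 by (simp add: field_simps power2_eq_square)
  also have "\<dots> \<le> K/norm k^2 * Ec + 2*Es" using qa Ec0 by (intro add_mono mult_right_mono) auto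
  finally show "cmod (coef_D (lam_p g b u k) (lam_m g b u k) t) \<le> K/norm k^2 * Ec + 2*Es" .
  have "cmod (coef_B (lam_p g b u k) (lam_m g b u k) t) \<le> (Ec + Es)/a"
    using norm_diff_quotient_le[OF a0 w _ _ ep em, of 1 1 1 1] unfolding coef_B_def by simp
  also have "\<dots> = 2/(u*norm k^2) * (Ec + Es)" by (simp add: a_def)
  finally show "cmod (coef_B (lam_p g b u k) (lam_m g b u k) t) \<le> 2/(u*norm k^2) * (Ec + Es)" .
qed

lemma scaled_sum_le:
  fixes C p q x y a b A B :: real
  assumes "0 \<le> p" "p \<le> C" "0 \<le> q" "q \<le> C" "0 \<le> x" "0 \<le> y"
    and "0 \<le> a" "a \<le> A" "0 \<le> b" "b \<le> B"
  shows "p * x * a + q * y * b \<le> C * (x * A + y * B)"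
proof -
  have "p * (x * a) \<le> C * (x * A)" and "q * (y * b) \<le> C * (y * B)"
    using assms by (intro mult_mono mult_nonneg_nonneg; simp)+
  then show ?thesis by (simp add: algebra_simps)
qed

lemma discr_large_k:
  fixes g b u x :: real
  assumes "g \<ge> 0" "b \<ge> 0" "u > 0" and x: "2 + 4*(g+b)/u \<le> x"
  shows "1 \<le> x" and "4*(g^2*x^2 + b^2) \<le> 3/4 * u^2 * x^4"
proof -
  have "0 \<le> 4*(g+b)/u" using assms(1-3) by simp
  then show x1: "1 \<le> x" using x by linarith
  have "4*(g+b)/u \<le> x" using x by linarith
  then have "4*(g+b) \<le> u * x" using assms(3) by (simp add: pos_divide_le_eq mult.commute)
  then have "(4*(g+b))^2 \<le> (u * x)^2" using assms(1,2) by (intro power_mono) auto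
  moreover have "16*(g^2+b^2) \<le> (4*(g+b))^2"
    using assms(1,2) by (simp add: power2_eq_square algebra_simps)
  ultimately have "16*(g^2+b^2) \<le> u^2 * x^2" by (simp add: power_mult_distrib)
  then have "16*(g^2+b^2) * x^2 \<le> u^2 * x^2 * x^2" by (rule mult_right_mono) simp
  moreover have "b^2 * 1 \<le> b^2 * x^2" using x1 by (intro mult_left_mono) (auto simp: one_le_power)
  moreover have "0 \<le> u^2 * x^4" by simp
  ultimately show "4*(g^2*x^2 + b^2) \<le> 3/4 * u^2 * x^4" by (simp add: power4_eq_xxxx power2_eq_square algebra_simps)
qed

subsection \<open>Bounds on the matrix\<close>

lemma Nmat_bound_small_k:
  assumes g: "\<gamma> > 0" and b: "\<beta> > 0" and u: "\<mu> > 0"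
  shows "\<forall>\<^sub>F C in at_top. \<forall>t k i j. t \<ge> 0 \<longrightarrow> norm k \<le> min 1 (\<beta>/\<mu>) \<longrightarrow> i < 7 \<longrightarrow> j < 7 \<longrightarrow>
      cmod (Nmat \<gamma> \<beta> \<mu> t k i j)
        \<le> C * bpat 1 (norm k) 1 1 1 i j * exp (- (1/2) * \<mu> * norm k ^ 2 * t)"
proof -
  define C0 where "C0 = max (2 * (1 + \<mu> + \<gamma>^2 + \<beta>^2) / \<beta>) (max (2*\<gamma>/\<beta>) 2)"
  show ?thesis
  proof (rule eventually_at_top_linorderI[of C0], intro allI impI)
    fix C t :: real and k :: "real^3" and i j :: nat
    assume "C0 \<le> C" and t: "t \<ge> 0" and sk: "norm k \<le> min 1 (\<beta>/\<mu>)" and i: "i < 7" and j: "j < 7"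
    then have C: "2 * (1 + \<mu> + \<gamma>^2 + \<beta>^2) / \<beta> \<le> C" "2*\<gamma>/\<beta> \<le> C" "2 \<le> C"
      by (simp_all add: C0_def)
    define E where "E = exp (- (1/2) * \<mu> * norm k ^ 2 * t)"
    have E0: "0 \<le> E" by (simp add: E_def)
    have s1: "norm k \<le> 1" and sb: "\<mu> * norm k \<le> \<beta>" using sk u by (auto simp: field_simps)
    let ?lp = "lam_p \<gamma> \<beta> \<mu> k" and ?lm = "lam_m \<gamma> \<beta> \<mu> k"
    note coefs = coefs_bound_small_k[OF b u t s1 sb, where g = \<gamma>, folded E_def]
    have A: "cmod (coef_A ?lp ?lm t) \<le> C * 1 * E" and D: "cmod (coef_D ?lp ?lm t) \<le> C * 1 * E"
      using coefs(2,3) mult_right_mono[OF C(1) E0] by auto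
    have "\<gamma> * norm k * cmod (coef_B ?lp ?lm t) \<le> \<gamma> * norm k * (2/\<beta> * E)"
      using coefs(1) g by (intro mult_left_mono) auto
    also have "\<dots> = 2*\<gamma>/\<beta> * (norm k * E)" by simp
    also have "\<dots> \<le> C * (norm k * E)" using C(2) by (rule mult_right_mono) (simp add: E0)
    finally have B01: "\<gamma> * norm k * cmod (coef_B ?lp ?lm t) \<le> C * norm k * E"
      by (simp only: mult.assoc)
    have "\<beta> * cmod (coef_B ?lp ?lm t) \<le> \<beta> * (2/\<beta> * E)"
      using coefs(1) b by (intro mult_left_mono) auto
    also have "\<dots> \<le> C * 1 * E" using b C(3) E0 by (simp add: mult_right_mono)
    finally have B12: "\<beta> * cmod (coef_B ?lp ?lm t) \<le> C * 1 * E" .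
    have "cmod (Nmat \<gamma> \<beta> \<mu> t k i j) \<le> bpat (C*1*E) (C*norm k*E) (C*1*E) (C*1*E) (C*1*E) i j"
      using g b by (intro norm_Nmat_le_bpat[OF _ _ i j A B01 D B12 A]) auto
    then show "cmod (Nmat \<gamma> \<beta> \<mu> t k i j)
        \<le> C * bpat 1 (norm k) 1 1 1 i j * exp (- (1/2) * \<mu> * norm k ^ 2 * t)"
      by (simp only: mult_bpat E_def)
  qed
qed

lemma Nmat_bound_middle_k:
  assumes g: "\<gamma> > 0" and b: "\<beta> > 0" and u: "\<mu> > 0" and e0: "0 < \<epsilon>"
    and c: "c \<le> min (\<mu>*\<epsilon>^2/2) (\<gamma>^2/\<mu>) / 2"
  shows "\<forall>\<^sub>F C in at_top. \<forall>t k i j. t \<ge> 0 \<longrightarrow> lam_p \<gamma> \<beta> \<mu> k \<noteq> lam_m \<gamma> \<beta> \<mu> k \<longrightarrow>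
      \<epsilon> \<le> norm k \<longrightarrow> norm k \<le> L \<longrightarrow> i < 7 \<longrightarrow> j < 7 \<longrightarrow>
      cmod (Nmat \<gamma> \<beta> \<mu> t k i j) \<le> C * bpat 1 1 1 1 1 i j * exp (- c * t)"
proof -
  define m where "m = min (\<mu>*\<epsilon>^2/2) (\<gamma>^2/\<mu>)"
  define M where "M = 1 + \<mu>*L^2 + \<gamma>^2*L^2 + \<beta>^2"
  define C0 where "C0 = max (1 + M*(2/m)) (max (\<gamma>*L*(2/m)) (\<beta>*(2/m)))"
  have m0: "m > 0" using g u e0 by (simp add: m_def)
  show ?thesis
  proof (rule eventually_at_top_linorderI[of C0], intro allI impI)
    fix C t :: real and k :: "real^3" and i j :: nat
    assume "C0 \<le> C" and t: "t \<ge> 0" and ne: "lam_p \<gamma> \<beta> \<mu> k \<noteq> lam_m \<gamma> \<beta> \<mu> k"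
      and sk: "\<epsilon> \<le> norm k" "norm k \<le> L" and i: "i < 7" and j: "j < 7"
    then have C: "1 + M*(2/m) \<le> C" "\<gamma>*L*(2/m) \<le> C" "\<beta>*(2/m) \<le> C"
      by (simp_all add: C0_def)
    define E where "E = exp (-(m/2)*t)"
    define F where "F = exp (- c * t)"
    have E0: "0 \<le> E" by (simp add: E_def)
    have "- (m/2) * t \<le> - c * t" using c t unfolding m_def by (intro mult_right_mono) auto
    then have EF: "E \<le> F" unfolding E_def F_def by simp
    have scale: "p * E \<le> C * 1 * F" if "0 \<le> p" "p \<le> C" for p
      using mult_mono[OF that(2) EF order_trans[OF that] E0] by simp
    let ?lp = "lam_p \<gamma> \<beta> \<mu> k" and ?lm = "lam_m \<gamma> \<beta> \<mu> k"
    note coefs = coefs_bound_middle_k[OF g u t ne e0 sk, folded m_def, folded E_def M_def]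
    have "0 \<le> 1 + M*(2/m)" using u m0 by (simp add: M_def)
    note scale_AD = scale[OF this C(1)]
    have A: "cmod (coef_A ?lp ?lm t) \<le> C * 1 * F" using coefs(2) scale_AD by (rule order_trans)
    have D: "cmod (coef_D ?lp ?lm t) \<le> C * 1 * F" using coefs(3) scale_AD by (rule order_trans)
    have "\<gamma> * norm k * cmod (coef_B ?lp ?lm t) \<le> \<gamma> * L * (2/m * E)"
      using coefs(1) g e0 sk by (intro mult_mono) auto
    also have "\<dots> \<le> C * 1 * F" using scale[OF _ C(2)] g m0 e0 sk by (simp add: mult.assoc)
    finally have B01: "\<gamma> * norm k * cmod (coef_B ?lp ?lm t) \<le> C * 1 * F" .
    have "\<beta> * cmod (coef_B ?lp ?lm t) \<le> \<beta> * (2/m * E)"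
      using coefs(1) b by (intro mult_left_mono) auto
    also have "\<dots> \<le> C * 1 * F" using scale[OF _ C(3)] b m0 by (simp add: mult.assoc)
    finally have B12: "\<beta> * cmod (coef_B ?lp ?lm t) \<le> C * 1 * F" .
    have "cmod (Nmat \<gamma> \<beta> \<mu> t k i j) \<le> bpat (C*1*F) (C*1*F) (C*1*F) (C*1*F) (C*1*F) i j"
      using g b by (intro norm_Nmat_le_bpat[OF _ _ i j A B01 D B12 A]) auto
    then show "cmod (Nmat \<gamma> \<beta> \<mu> t k i j) \<le> C * bpat 1 1 1 1 1 i j * exp (- c * t)"
      by (simp only: mult_bpat F_def)
  qed
qed

lemma Nmat_bound_large_k:
  assumes g: "\<gamma> > 0" and b: "\<beta> > 0" and u: "\<mu> > 0"
    and c: "c \<le> \<gamma>^2/\<mu>" "c \<le> \<mu>/2"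
  shows "\<forall>\<^sub>F C in at_top. \<forall>t k i j. t \<ge> 0 \<longrightarrow> 2 + 4*(\<gamma>+\<beta>)/\<mu> \<le> norm k \<longrightarrow> i < 7 \<longrightarrow> j < 7 \<longrightarrow>
      cmod (Nmat \<gamma> \<beta> \<mu> t k i j)
        \<le> C * (bpat 1 (1 / norm k) (1 / norm k ^ 2) (1 / norm k ^ 2) 1 i j * exp (- c * t)
             + bpat (1 / norm k ^ 2) (1 / norm k) 1 (1 / norm k ^ 2) (1 / norm k ^ 2) i j
                 * exp (- c * norm k ^ 2 * t))"
proof -
  define K where "K = 4*(\<gamma>^2+\<beta>^2)/\<mu>^2"
  define C0 where "C0 = max (max 2 K) (max (2*\<gamma>/\<mu>) (2*\<beta>/\<mu>))"
  have K0: "0 \<le> K" by (simp add: K_def)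
  show ?thesis
  proof (rule eventually_at_top_linorderI[of C0], intro allI impI)
    fix C t :: real and k :: "real^3" and i j :: nat
    assume "C0 \<le> C" and t: "t \<ge> 0" and sk: "2 + 4*(\<gamma>+\<beta>)/\<mu> \<le> norm k" and i: "i < 7" and j: "j < 7"
    then have C: "2 \<le> C" "K \<le> C" "2*\<gamma>/\<mu> \<le> C" "2*\<beta>/\<mu> \<le> C" by (simp_all add: C0_def)
    define F1 where "F1 = exp (- c * t)"
    define F2 where "F2 = exp (- c * norm k ^ 2 * t)"
    define Ec where "Ec = exp (-(\<gamma>^2/\<mu>)*t)"
    define Es where "Es = exp (-(\<mu>*norm k^2/2)*t)"
    have s1: "1 \<le> norm k" and big: "4*(\<gamma>^2*norm k^2 + \<beta>^2) \<le> 3/4 * \<mu>^2 * norm k^4"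
      using discr_large_k[OF _ _ u sk] g b by simp_all
    note coefs = coefs_bound_large_k[OF u t s1 big, folded Ec_def Es_def K_def]
    have E0: "0 \<le> Ec" "0 \<le> Es" by (simp_all add: Ec_def Es_def)
    have "- (\<gamma>^2/\<mu>) * t \<le> - c * t" using c t by (intro mult_right_mono) auto
    then have EF1: "Ec \<le> F1" unfolding Ec_def F1_def by simp
    have "c * (norm k^2 * t) \<le> (\<mu>/2) * (norm k^2 * t)" using c t by (intro mult_right_mono) auto
    then have EF2: "Es \<le> F2" unfolding Es_def F2_def by (simp add: algebra_simps)
    note scale = scaled_sum_le[where C = C and a = Ec and b = Es and A = F1 and B = F2]
    let ?lp = "lam_p \<gamma> \<beta> \<mu> k" and ?lm = "lam_m \<gamma> \<beta> \<mu> k"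
    have A: "cmod (coef_A ?lp ?lm t) \<le> C * (1 * F1 + 1 / norm k ^ 2 * F2)"
      using coefs(1) scale[where p = 2 and q = K and x = 1 and y = "1 / norm k ^ 2"]
        C K0 E0 EF1 EF2 by simp
    have D: "cmod (coef_D ?lp ?lm t) \<le> C * (1 / norm k ^ 2 * F1 + 1 * F2)"
      using coefs(2) scale[where p = K and q = 2 and x = "1 / norm k ^ 2" and y = 1]
        C K0 E0 EF1 EF2 by simp
    have "\<gamma> * norm k * cmod (coef_B ?lp ?lm t) \<le> \<gamma> * norm k * (2/(\<mu>*norm k^2) * (Ec + Es))"
      using coefs(3) g s1 by (intro mult_left_mono) auto
    also have "\<dots> = 2*\<gamma>/\<mu> * (1 / norm k) * Ec + 2*\<gamma>/\<mu> * (1 / norm k) * Es"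
      using s1 u by (simp add: field_simps power2_eq_square flip: zero_less_norm_iff)
    also have "\<dots> \<le> C * (1 / norm k * F1 + 1 / norm k * F2)"
      using scale[where p = "2*\<gamma>/\<mu>" and q = "2*\<gamma>/\<mu>" and x = "1 / norm k" and y = "1 / norm k"]
        C g u E0 EF1 EF2 by simp
    finally have B01: "\<gamma> * norm k * cmod (coef_B ?lp ?lm t) \<le> C * (1 / norm k * F1 + 1 / norm k * F2)" .
    have "\<beta> * cmod (coef_B ?lp ?lm t) \<le> \<beta> * (2/(\<mu>*norm k^2) * (Ec + Es))"
      using coefs(3) b by (intro mult_left_mono) auto
    also have "\<dots> = 2*\<beta>/\<mu> * (1 / norm k ^ 2) * Ec + 2*\<beta>/\<mu> * (1 / norm k ^ 2) * Es"
      by (simp add: add_divide_distrib algebra_simps)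
    also have "\<dots> \<le> C * (1 / norm k ^ 2 * F1 + 1 / norm k ^ 2 * F2)"
      using scale[where p = "2*\<beta>/\<mu>" and q = "2*\<beta>/\<mu>" and x = "1 / norm k ^ 2" and y = "1 / norm k ^ 2"]
        C b u E0 EF1 EF2 by simp
    finally have B12: "\<beta> * cmod (coef_B ?lp ?lm t) \<le> C * (1 / norm k ^ 2 * F1 + 1 / norm k ^ 2 * F2)" .
    have "cmod (Nmat \<gamma> \<beta> \<mu> t k i j)
        \<le> bpat (C * (1 * F1 + 1 / norm k ^ 2 * F2)) (C * (1 / norm k * F1 + 1 / norm k * F2))
             (C * (1 / norm k ^ 2 * F1 + 1 * F2)) (C * (1 / norm k ^ 2 * F1 + 1 / norm k ^ 2 * F2))
             (C * (1 * F1 + 1 / norm k ^ 2 * F2)) i j"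
      using g b by (intro norm_Nmat_le_bpat[OF _ _ i j A B01 D B12 A]) auto
    then show "cmod (Nmat \<gamma> \<beta> \<mu> t k i j)
        \<le> C * (bpat 1 (1 / norm k) (1 / norm k ^ 2) (1 / norm k ^ 2) 1 i j * exp (- c * t)
             + bpat (1 / norm k ^ 2) (1 / norm k) 1 (1 / norm k ^ 2) (1 / norm k ^ 2) i j
                 * exp (- c * norm k ^ 2 * t))"
      by (simp only: mult_bpat_add F1_def F2_def)
  qed
qed

theorem proposition5p1:
  fixes \<gamma> \<beta> \<mu> :: real
  assumes "\<gamma> > 0" and "\<beta> > 0" and "\<mu> > 0"
  shows "\<exists>\<epsilon> L C c. 0 < \<epsilon> \<and> \<epsilon> < L \<and> C > 0 \<and> c > 0 \<and>
    (\<forall>t k i j. t \<ge> 0 \<and> lam_p \<gamma> \<beta> \<mu> k \<noteq> lam_m \<gamma> \<beta> \<mu> k \<and> i < 7 \<and> j < 7 \<longrightarrow>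
       (norm k \<le> \<epsilon> \<longrightarrow>
          cmod (Nmat \<gamma> \<beta> \<mu> t k i j)
            \<le> C * bpat 1 (norm k) 1 1 1 i j * exp (- (1/2) * \<mu> * norm k ^ 2 * t)) \<and>
       (L \<le> norm k \<longrightarrow>
          cmod (Nmat \<gamma> \<beta> \<mu> t k i j)
            \<le> C * (bpat 1 (1 / norm k) (1 / norm k ^ 2) (1 / norm k ^ 2) 1 i j * exp (- c * t)
                 + bpat (1 / norm k ^ 2) (1 / norm k) 1 (1 / norm k ^ 2) (1 / norm k ^ 2) i j
                     * exp (- c * norm k ^ 2 * t))) \<and>
       (\<epsilon> \<le> norm k \<and> norm k \<le> L \<longrightarrow>
          cmod (Nmat \<gamma> \<beta> \<mu> t k i j) \<le> C * bpat 1 1 1 1 1 i j * exp (- c * t)))"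
proof -
  have g: "\<gamma> > 0" and b: "\<beta> > 0" and u: "\<mu> > 0" using assms by auto
  define \<epsilon> where "\<epsilon> = min 1 (\<beta>/\<mu>)"
  define L where "L = 2 + 4*(\<gamma>+\<beta>)/\<mu>"
  define m where "m = min (\<mu>*\<epsilon>^2/2) (\<gamma>^2/\<mu>)"
  define c where "c = min (m/2) (\<mu>/2)"
  have "\<epsilon> \<le> 1" "0 \<le> 4*(\<gamma>+\<beta>)/\<mu>" using g b u by (simp_all add: \<epsilon>_def)
  then have \<epsilon>: "0 < \<epsilon>" "\<epsilon> < L" using b u unfolding L_def by (simp_all add: \<epsilon>_def)
  have m: "0 < m" "m \<le> \<gamma>^2/\<mu>" using g u \<epsilon>(1) by (simp_all add: m_def)
  then have c: "0 < c" "c \<le> m/2" "c \<le> \<mu>/2" using u by (simp_all add: c_def)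
  with m have c_le: "c \<le> \<gamma>^2/\<mu>" by linarith
  have "\<exists>C. C > 0 \<and> P0 C \<and> P1 C \<and> P2 C"
    if "\<forall>\<^sub>F C in at_top. P0 C" "\<forall>\<^sub>F C in at_top. P1 C" "\<forall>\<^sub>F C in at_top. P2 C"
    for P0 P1 P2 :: "real \<Rightarrow> bool"
    using eventually_happens'[OF trivial_limit_at_top_linorder
        eventually_conj[OF eventually_gt_at_top[of 0] eventually_conj[OF that(1) eventually_conj[OF that(2,3)]]]]
    by blast
  from this[OF Nmat_bound_small_k[OF g b u, folded \<epsilon>_def]
      Nmat_bound_middle_k[OF g b u \<epsilon>(1) c(2)[unfolded m_def], where L = L]
      Nmat_bound_large_k[OF g b u c_le c(3), folded L_def]]
  show ?thesis
    by (elim exE) (rule exI[of _ \<epsilon>], rule exI[of _ L], rule exI, rule exI[of _ c], use \<epsilon> c(1) in blast)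
qed

end
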